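(* Consider any state (the tree held by some replica at some time in some execution) of FugueMax, respectively of Fugue, and let $\prec$ be its list order (the traversal order including tombstones). Then: (a) For any element $D$ in the state, the left origin of $D$ is obtained as follows: starting at $D$, walk up the tree until reaching a node that is a right child of its parent; the parent of that node is $D$'s left origin (the root corresponding to $\mathit{start}$). (b) For elements $A,B$ in the state with $A\prec B$: $B$ is a descendant of $A$ in the FugueMax (respectively Fugue) tree if and only if $B$ is a descendant of $A$ in the left-origin tree.
   Context: Replicated list model: a list is replicated over replicas with unique, totally ordered replica IDs. A replica may invoke $\mathsf{insert}(i,x)$ or $\mathsf{delete}(i)$; operations are applied locally immediately and disseminated by causal broadcast (every message eventually delivered everywhere; a message is delivered only after all messages delivered at its sender before it was sent; the sender delivers its own message immediately). The left origin of an element inserted by $\mathsf{insert}(i,x)$ is the element at index $i-1$ of the inserting replica's visible list at that time, or the symbol $\mathit{start}$ if $i=0$; the left-origin tree is the tree rooted at $\mathit{start}$ in which each element's parent is its left origin. Fugue: each replica's state is a tree with a root; each non-root node has a unique ID, a value (or tombstone $\bot$), a parent, and a side ($L$ or $R$); a node may have several left and several right children. IDs are pairs $(\text{replicaID},\text{counter})$ ordered lexicographically. Traversal of node $v$: traverse its left children in sibling order, visit $v$, traverse its right children in sibling order; in Fugue siblings of the same side are ordered by increasing ID. The traversal including tombstones of the whole tree gives the list order; the visible list consists of the nodes with value $\neq\bot$. $\mathsf{insert}(i,x)$: new ID $(\text{replicaID},\text{counter})$, increment counter; leftOrigin = node of the $(i-1)$-th visible element or the root if $i=0$; rightOrigin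 = node immediately after leftOrigin in the traversal including tombstones (or $\mathit{end}$ if none). If leftOrigin has no right child, the new node is a right child of leftOrigin, otherwise a left child of rightOrigin; the node is broadcast and each replica on delivery inserts it as the given child. $\mathsf{delete}(i)$: broadcast the ID of the $i$-th visible node; on delivery its value is set to $\bot$. FugueMax: identical to Fugue except that each right child also records its rightOrigin, and right-side siblings are ordered in the reverse of the list order of their right origins (sibling with the later right origin first, $\mathit{end}$ counting as later than every node), ties (equal right origins) broken by increasing ID. Left-side siblings are still ordered by increasing ID. *)

theory Defs
  imports Main "HOL-Library.Product_Lexorder"
begin

(* Replica IDs are natural numbers (unique, totally ordered).
   Node IDs are pairs (replicaID, counter), ordered lexicographically. *)
type_synonym rid = nat
type_synonym nid = "nat \<times> nat"

(* Root = the root of the Fugue tree, corresponding to the symbol start *)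
datatype nref = Root | Nd nid
datatype side = L | R
datatype alg = Fugue | FugueMax

(* A tree node.  val = None is the tombstone.  rorig = None means "end".
   rorig is the recorded right origin (only used by FugueMax, for right children).
   lorig is ghost information: the left origin computed by the insert operation
   (the node of the (i-1)-th visible element, or Root for i = 0). *)
record 'v node =
  val :: "'v option"
  parent :: nref
  side :: side
  rorig :: "nid option"
  lorig :: nref

type_synonym 'v tree = "nid \<rightharpoonup> 'v node"

definition pos :: "'a list \<Rightarrow> 'a \<Rightarrow> nat" where
  "pos xs a = length (takeWhile (\<lambda>y. y \<noteq> a) xs)"

(* children of v on side s, in sibling order; xs is the list order of the
   whole tree (needed by FugueMax for right siblings) *)
definition kids :: "alg \<Rightarrow> nid list \<Rightarrow> 'v tree \<Rightarrow> nref \<Rightarrow> side \<Rightarrow> nid list" where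
  "kids a xs T v s =
     (let cs = sorted_list_of_set {n. \<exists>nd. T n = Some nd \<and> parent nd = v \<and> side nd = s} in
      if a = FugueMax \<and> s = R then
        sort_key (\<lambda>n. (case rorig (the (T n)) of
                          None \<Rightarrow> 0
                        | Some m \<Rightarrow> length xs - pos xs m, n)) cs
      else cs)"

fun trav :: "alg \<Rightarrow> nid list \<Rightarrow> 'v tree \<Rightarrow> nat \<Rightarrow> nref \<Rightarrow> nid list" where
  "trav a xs T 0 v = []"
| "trav a xs T (Suc f) v =
     concat (map (\<lambda>c. trav a xs T f (Nd c)) (kids a xs T v L))
     @ (case v of Root \<Rightarrow> [] | Nd n \<Rightarrow> [n])
     @ concat (map (\<lambda>c. trav a xs T f (Nd c)) (kids a xs T v R))"

(* the list order of a state: the traversal of the whole tree.  For FugueMax the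
   sibling order refers to the list order itself, so the list order is the
   (self-consistent) traversal. *)
definition list_order :: "alg \<Rightarrow> 'v tree \<Rightarrow> nid list" where
  "list_order a T = (THE xs. xs = trav a xs T (Suc (card (dom T))) Root)"

definition visible :: "alg \<Rightarrow> 'v tree \<Rightarrow> nid list" where
  "visible a T = filter (\<lambda>n. \<exists>nd. T n = Some nd \<and> val nd \<noteq> None) (list_order a T)"

definition lo_less :: "alg \<Rightarrow> 'v tree \<Rightarrow> nid \<Rightarrow> nid \<Rightarrow> bool" where
  "lo_less a T A B = (\<exists>i j. i < j \<and> j < length (list_order a T)
                        \<and> list_order a T ! i = A \<and> list_order a T ! j = B)"

datatype 'v msg = Ins nid "'v node" | Del nid

fun apply_msg :: "'v msg \<Rightarrow> 'v tree \<Rightarrow> 'v tree" where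
  "apply_msg (Ins n nd) T = T(n \<mapsto> nd)"
| "apply_msg (Del n) T = T(n := map_option (\<lambda>nd. nd\<lparr>val := None\<rparr>) (T n))"

(* global configuration: sent messages (sender, message, causal dependencies =
   the messages delivered at the sender when it was sent; message id = index),
   per-replica delivered message ids, trees and counters *)
record 'v conf =
  sent :: "(rid \<times> 'v msg \<times> nat set) list"
  delivered :: "rid \<Rightarrow> nat set"
  trees :: "rid \<Rightarrow> 'v tree"
  ctr :: "rid \<Rightarrow> nat"

definition init_conf :: "'v conf" where
  "init_conf = \<lparr>sent = [], delivered = (\<lambda>_. {}), trees = (\<lambda>_. Map.empty), ctr = (\<lambda>_. 0)\<rparr>"

definition send :: "rid \<Rightarrow> 'v msg \<Rightarrow> 'v conf \<Rightarrow> 'v conf" where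
  "send r m C = C\<lparr>sent := sent C @ [(r, m, delivered C r)],
                  delivered := (delivered C)(r := insert (length (sent C)) (delivered C r)),
                  trees := (trees C)(r := apply_msg m (trees C r))\<rparr>"

definition ins_node :: "alg \<Rightarrow> rid \<Rightarrow> nat \<Rightarrow> 'v \<Rightarrow> 'v conf \<Rightarrow> 'v node" where
  "ins_node a r i x C =
    (let T = trees C r; xs = list_order a T; vs = visible a T;
         lo = (if i = 0 then Root else Nd (vs ! (i - 1)));
         ro = (case lo of Root \<Rightarrow> (if xs = [] then None else Some (hd xs))
                        | Nd l \<Rightarrow> (if Suc (pos xs l) < length xs then Some (xs ! Suc (pos xs l)) else None));
         hasR = (\<exists>n nd. T n = Some nd \<and> parent nd = lo \<and> side nd = R)
     in if \<not> hasR then \<lparr>val = Some x, parent = lo, side = R, rorig = ro, lorig = lo\<rparr>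
        else \<lparr>val = Some x, parent = Nd (the ro), side = L, rorig = ro, lorig = lo\<rparr>)"

inductive reachable :: "alg \<Rightarrow> 'v conf \<Rightarrow> bool" for a where
  init: "reachable a init_conf"
| insert: "reachable a C \<Longrightarrow> i \<le> length (visible a (trees C r)) \<Longrightarrow>
     reachable a ((send r (Ins (r, ctr C r) (ins_node a r i x C)) C)\<lparr>ctr := (ctr C)(r := Suc (ctr C r))\<rparr>)"
| delete: "reachable a C \<Longrightarrow> i < length (visible a (trees C r)) \<Longrightarrow>
     reachable a (send r (Del (visible a (trees C r) ! i)) C)"
| deliver: "reachable a C \<Longrightarrow> k < length (sent C) \<Longrightarrow> k \<notin> delivered C r \<Longrightarrow>
     snd (snd (sent C ! k)) \<subseteq> delivered C r \<Longrightarrow>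
     reachable a (C\<lparr>delivered := (delivered C)(r := insert k (delivered C r)),
                    trees := (trees C)(r := apply_msg (fst (snd (sent C ! k))) (trees C r))\<rparr>)"

inductive walk_up :: "'v tree \<Rightarrow> nid \<Rightarrow> nref \<Rightarrow> bool" for T where
  right: "T d = Some nd \<Longrightarrow> side nd = R \<Longrightarrow> walk_up T d (parent nd)"
| left: "T d = Some nd \<Longrightarrow> side nd = L \<Longrightarrow> parent nd = Nd p \<Longrightarrow> walk_up T p res \<Longrightarrow> walk_up T d res"

definition tree_edges :: "'v tree \<Rightarrow> (nref \<times> nref) set" where
  "tree_edges T = {(parent nd, Nd n) | n nd. T n = Some nd}"

definition lo_edges :: "'v tree \<Rightarrow> (nref \<times> nref) set" where
  "lo_edges T = {(lorig nd, Nd n) | n nd. T n = Some nd}"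

end

theory Submission
  imports Defs "HOL-Library.Sublist"
begin

(* Give every node a rank (its insertion time), so that parents and right origins are older than
   their children.  Then the list order exists and is unique even for FugueMax, whose sibling
   order refers to the list order itself.  In the list order a node with right children is
   immediately followed by the leftmost node of its first right subtree, and walking up from that
   node leads back to it; so when an insertion creates a left child of the right origin, walking
   up from the new node reaches its left origin.  Every replica's tree agrees with the sender's
   tree on the nodes they share, which gives (a) everywhere.
   For (b), let c be the child of A above B.  If c is a left child, B precedes A in the list
   order.  If c is a right child, then by (a) the left origin of every node of the subtree of c
   is A or lies in that subtree with smaller rank, so B is a left-origin descendant of A.
   Conversely, by (a) every left-origin edge is a path in the tree. *)

section \<open>Ranked trees\<close>

definition ranked_tree :: "'v tree \<Rightarrow> (nid \<Rightarrow> nat) \<Rightarrow> bool" where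
  "ranked_tree T \<rho> \<longleftrightarrow> finite (dom T) \<and> (\<forall>n nd. T n = Some nd \<longrightarrow>
     (case parent nd of Root \<Rightarrow> side nd = R | Nd p \<Rightarrow> p \<in> dom T \<and> \<rho> p < \<rho> n) \<and>
     (case rorig nd of None \<Rightarrow> True | Some m \<Rightarrow> m \<in> dom T \<and> \<rho> m < \<rho> n))"

lemma ranked_tree_finite: "ranked_tree T \<rho> \<Longrightarrow> finite (dom T)"
  by (simp add: ranked_tree_def)

lemma ranked_treeD:
  "ranked_tree T \<rho> \<Longrightarrow> T n = Some nd \<Longrightarrow>
    (case parent nd of Root \<Rightarrow> side nd = R | Nd p \<Rightarrow> p \<in> dom T \<and> \<rho> p < \<rho> n) \<and>
    (case rorig nd of None \<Rightarrow> True | Some m \<Rightarrow> m \<in> dom T \<and> \<rho> m < \<rho> n)"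
  unfolding ranked_tree_def by blast

lemma ranked_tree_parent:
  "ranked_tree T \<rho> \<Longrightarrow> T n = Some nd \<Longrightarrow> parent nd = Nd p \<Longrightarrow> p \<in> dom T \<and> \<rho> p < \<rho> n"
  using ranked_treeD[of T \<rho> n nd] by simp

lemma ranked_tree_Root_child:
  "ranked_tree T \<rho> \<Longrightarrow> T n = Some nd \<Longrightarrow> parent nd = Root \<Longrightarrow> side nd = R"
  using ranked_treeD[of T \<rho> n nd] by simp

lemma ranked_tree_rorig:
  "ranked_tree T \<rho> \<Longrightarrow> T n = Some nd \<Longrightarrow> rorig nd = Some m \<Longrightarrow> m \<in> dom T \<and> \<rho> m < \<rho> n"
  using ranked_treeD[of T \<rho> n nd] by simp

lemma tree_edges_iff: "(x, y) \<in> tree_edges T \<longleftrightarrow> (\<exists>n nd. y = Nd n \<and> T n = Some nd \<and> parent nd = x)"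
  by (auto simp: tree_edges_def)

lemma lo_edges_iff: "(x, y) \<in> lo_edges T \<longleftrightarrow> (\<exists>n nd. y = Nd n \<and> T n = Some nd \<and> lorig nd = x)"
  by (auto simp: lo_edges_def)

lemma tree_edges_parent_unique: "(x, z) \<in> tree_edges T \<Longrightarrow> (y, z) \<in> tree_edges T \<Longrightarrow> x = y"
  by (auto simp: tree_edges_def)

definition nref_rank :: "(nid \<Rightarrow> nat) \<Rightarrow> nref \<Rightarrow> nat" where
  "nref_rank \<rho> v = (case v of Root \<Rightarrow> 0 | Nd n \<Rightarrow> Suc (\<rho> n))"

lemma tree_edges_subset_measure: "ranked_tree T \<rho> \<Longrightarrow> tree_edges T \<subseteq> measure (nref_rank \<rho>)"
  by (auto simp: tree_edges_iff nref_rank_def dest: ranked_tree_parent split: nref.split)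

lemma ranked_tree_acyclic: "ranked_tree T \<rho> \<Longrightarrow> acyclic (tree_edges T)"
  by (meson acyclic_subset tree_edges_subset_measure wf_acyclic wf_measure)

lemma ranked_tree_Root_reaches:
  assumes T: "ranked_tree T \<rho>" and m: "m \<in> dom T"
  shows "(Root, Nd m) \<in> (tree_edges T)\<^sup>*"
  using m
proof (induction "\<rho> m" arbitrary: m rule: less_induct)
  case less
  then obtain nd where nd: "T m = Some nd" by auto
  then have edge: "(parent nd, Nd m) \<in> tree_edges T" by (auto simp: tree_edges_iff)
  show ?case
  proof (cases "parent nd")
    case Root
    then show ?thesis using edge by simp
  next
    case (Nd p)
    then have "(Root, Nd p) \<in> (tree_edges T)\<^sup>*"
      using less ranked_tree_parent[OF T nd] by blast
    then show ?thesis using edge Nd by simp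
  qed
qed

lemma tree_edges_ancestors_comparable:
  assumes "(x, z) \<in> (tree_edges T)\<^sup>*" "(y, z) \<in> (tree_edges T)\<^sup>*"
  shows "(x, y) \<in> (tree_edges T)\<^sup>* \<or> (y, x) \<in> (tree_edges T)\<^sup>*"
  using assms
proof (induction arbitrary: y rule: rtrancl_induct)
  case (step z' z)
  from step.prems show ?case
  proof (cases rule: rtranclE)
    case (step y')
    then have "y' = z'" using tree_edges_parent_unique \<open>(z', z) \<in> tree_edges T\<close> by blast
    then show ?thesis using step.IH step by auto
  qed (use step in auto)
qed simp

section \<open>Descendants\<close>

definition descendants :: "'v tree \<Rightarrow> nref \<Rightarrow> nid set" where
  "descendants T v = {m. (v, Nd m) \<in> (tree_edges T)\<^sup>*}"

definition children :: "'v tree \<Rightarrow> nref \<Rightarrow> side \<Rightarrow> nid set" where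
  "children T v s = {n. \<exists>nd. T n = Some nd \<and> parent nd = v \<and> side nd = s}"

definition subtree_size :: "'v tree \<Rightarrow> nref \<Rightarrow> nat" where
  "subtree_size T v = card {w. (v, w) \<in> (tree_edges T)\<^sup>*}"

lemma children_edge: "c \<in> children T v s \<Longrightarrow> (v, Nd c) \<in> tree_edges T"
  by (auto simp: children_def tree_edges_iff)

lemma children_side_unique: "c \<in> children T v s \<Longrightarrow> c \<in> children T v s' \<Longrightarrow> s = s'"
  by (auto simp: children_def)

lemma finite_children: "finite (dom T) \<Longrightarrow> finite (children T v s)"
  by (rule finite_subset[rotated]) (auto simp: children_def)

lemma set_kids:
  assumes "finite (dom T)"
  shows "set (kids a xs T v s) = children T v s" "distinct (kids a xs T v s)"
proof -
  have "finite (children T v s)" using finite_children[OF assms] .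
  then show "set (kids a xs T v s) = children T v s" "distinct (kids a xs T v s)"
    unfolding kids_def Let_def children_def[symmetric] by auto
qed

lemma self_in_descendants: "n \<in> descendants T (Nd n)"
  by (simp add: descendants_def)

lemma descendants_child_subset: "(v, Nd c) \<in> tree_edges T \<Longrightarrow> descendants T (Nd c) \<subseteq> descendants T v"
  unfolding descendants_def by (blast intro: converse_rtrancl_into_rtrancl)

lemma reachable_nref_in_dom:
  "(v, w) \<in> (tree_edges T)\<^sup>* \<Longrightarrow> w \<in> insert v (Nd ` dom T)"
  by (cases rule: rtranclE) (force simp: tree_edges_iff)+

lemma descendants_in_dom: "m \<in> descendants T v \<Longrightarrow> v = Nd m \<or> m \<in> dom T"
  unfolding descendants_def by (auto dest: reachable_nref_in_dom)

lemma descendants_Root: "ranked_tree T \<rho> \<Longrightarrow> descendants T Root = dom T"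
  using descendants_in_dom[of _ T Root] ranked_tree_Root_reaches unfolding descendants_def by blast

lemma descendants_unfold:
  "descendants T v = (case v of Root \<Rightarrow> {} | Nd n \<Rightarrow> {n})
     \<union> (\<Union>c \<in> children T v L \<union> children T v R. descendants T (Nd c))"
proof -
  have "(v, Nd m) \<in> (tree_edges T)\<^sup>* \<longleftrightarrow>
      v = Nd m \<or> (\<exists>c \<in> children T v L \<union> children T v R. (Nd c, Nd m) \<in> (tree_edges T)\<^sup>*)" for m
  proof
    assume "(v, Nd m) \<in> (tree_edges T)\<^sup>*"
    then show "v = Nd m \<or> (\<exists>c \<in> children T v L \<union> children T v R. (Nd c, Nd m) \<in> (tree_edges T)\<^sup>*)"
    proof (cases rule: converse_rtranclE)
      case (step y)
      then obtain c nd where "y = Nd c" "T c = Some nd" "parent nd = v" by (auto simp: tree_edges_iff)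
      then show ?thesis using step(2) by (cases "side nd") (auto simp: children_def)
    qed simp
  qed (auto dest: children_edge intro: converse_rtrancl_into_rtrancl)
  then show ?thesis by (cases v) (auto simp: descendants_def)
qed

lemma tree_edges_trancl_child:
  assumes "(Nd A, Nd B) \<in> (tree_edges T)\<^sup>+"
  obtains c s where "c \<in> children T (Nd A) s" "B \<in> descendants T (Nd c)"
proof -
  obtain y where y: "(Nd A, y) \<in> tree_edges T" "(y, Nd B) \<in> (tree_edges T)\<^sup>*"
    using assms by (blast dest: tranclD)
  then obtain c nd where "y = Nd c" "T c = Some nd" "parent nd = Nd A" by (auto simp: tree_edges_iff)
  then show ?thesis using that[of c "side nd"] y(2) by (simp add: children_def descendants_def)
qed

lemma not_in_child_descendants:
  assumes "ranked_tree T \<rho>" "(Nd n, Nd c) \<in> tree_edges T"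
  shows "n \<notin> descendants T (Nd c)"
  using ranked_tree_acyclic[OF assms(1)] assms(2)
  by (auto simp: descendants_def acyclic_def intro: rtrancl_into_trancl2)

lemma children_descendants_disjoint:
  assumes T: "ranked_tree T \<rho>" and c: "(v, Nd c) \<in> tree_edges T" "(v, Nd c') \<in> tree_edges T" "c \<noteq> c'"
  shows "descendants T (Nd c) \<inter> descendants T (Nd c') = {}"
proof -
  have no_path: "(Nd x, Nd y) \<notin> (tree_edges T)\<^sup>*"
    if "x \<noteq> y" "(v, Nd x) \<in> tree_edges T" "(v, Nd y) \<in> tree_edges T" for x y
  proof
    assume "(Nd x, Nd y) \<in> (tree_edges T)\<^sup>*"
    with that(1) have "(Nd x, Nd y) \<in> (tree_edges T)\<^sup>+" by (auto simp: rtrancl_eq_or_trancl)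
    then obtain z where "(Nd x, z) \<in> (tree_edges T)\<^sup>*" "(z, Nd y) \<in> tree_edges T"
      by (blast dest: tranclD2)
    with that(2,3) have "(v, v) \<in> (tree_edges T)\<^sup>+"
      using tree_edges_parent_unique by (blast intro: rtrancl_into_trancl2)
    then show False using ranked_tree_acyclic[OF T] by (simp add: acyclic_def)
  qed
  show ?thesis
    using tree_edges_ancestors_comparable no_path[of c c'] no_path[of c' c] c
    by (fastforce simp: descendants_def)
qed

lemma finite_reachable_nrefs:
  assumes "ranked_tree T \<rho>"
  shows "finite {w. (v, w) \<in> (tree_edges T)\<^sup>*}"
proof -
  have "{w. (v, w) \<in> (tree_edges T)\<^sup>*} \<subseteq> insert v (Nd ` dom T)"
    using reachable_nref_in_dom by blast
  then show ?thesis using ranked_tree_finite[OF assms] finite_subset by blast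
qed

lemma subtree_size_pos: "ranked_tree T \<rho> \<Longrightarrow> 0 < subtree_size T v"
  unfolding subtree_size_def using finite_reachable_nrefs card_gt_0_iff by blast

lemma subtree_size_child:
  assumes T: "ranked_tree T \<rho>" and c: "c \<in> children T v s"
  shows "subtree_size T (Nd c) < subtree_size T v"
proof -
  have e: "(v, Nd c) \<in> tree_edges T" using children_edge[OF c] .
  have "{w. (Nd c, w) \<in> (tree_edges T)\<^sup>*} \<subset> {w. (v, w) \<in> (tree_edges T)\<^sup>*}"
  proof
    show "{w. (Nd c, w) \<in> (tree_edges T)\<^sup>*} \<subseteq> {w. (v, w) \<in> (tree_edges T)\<^sup>*}"
      using e by (blast intro: converse_rtrancl_into_rtrancl)
    have "(Nd c, v) \<notin> (tree_edges T)\<^sup>*"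
      using ranked_tree_acyclic[OF T] e by (auto simp: acyclic_def intro: rtrancl_into_trancl2)
    then show "{w. (Nd c, w) \<in> (tree_edges T)\<^sup>*} \<noteq> {w. (v, w) \<in> (tree_edges T)\<^sup>*}" by blast
  qed
  then show ?thesis
    unfolding subtree_size_def using finite_reachable_nrefs[OF T] psubset_card_mono by blast
qed

lemma subtree_size_Root: "ranked_tree T \<rho> \<Longrightarrow> subtree_size T Root = Suc (card (dom T))"
proof -
  assume T: "ranked_tree T \<rho>"
  have "{w. (Root, w) \<in> (tree_edges T)\<^sup>*} = insert Root (Nd ` dom T)"
    using ranked_tree_Root_reaches[OF T] reachable_nref_in_dom by blast
  then show ?thesis
    using ranked_tree_finite[OF T] by (simp add: subtree_size_def card_image inj_on_def image_iff)
qed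

section \<open>Traversal\<close>

lemma trav_subset_descendants:
  assumes "finite (dom T)"
  shows "set (trav a xs T f v) \<subseteq> descendants T v"
proof (induction f arbitrary: v)
  case (Suc f)
  have "set (trav a xs T f (Nd c)) \<subseteq> descendants T v" if "c \<in> set (kids a xs T v s)" for c s
    using Suc.IH[of "Nd c"] descendants_child_subset children_edge that set_kids(1)[OF assms] by blast
  moreover have "set (case v of Root \<Rightarrow> [] | Nd n \<Rightarrow> [n]) \<subseteq> descendants T v"
    by (cases v) (simp_all add: self_in_descendants)
  ultimately show ?case by (simp only: trav.simps set_append set_concat set_map) blast
qed simp

lemma set_trav:
  assumes T: "ranked_tree T \<rho>"
  shows "subtree_size T v \<le> f \<Longrightarrow> set (trav a xs T f v) = descendants T v"
proof (induction f arbitrary: v)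
  case 0
  then show ?case using subtree_size_pos[OF T, of v] by simp
next
  case (Suc f)
  have "set (trav a xs T f (Nd c)) = descendants T (Nd c)" if "c \<in> children T v s" for c s
    using Suc subtree_size_child[OF T that] by simp
  then have side: "(\<Union>c\<in>set (kids a xs T v s). set (trav a xs T f (Nd c)))
      = (\<Union>c\<in>children T v s. descendants T (Nd c))" for s
    using set_kids(1)[OF ranked_tree_finite[OF T]] by simp
  have self: "set (case v of Root \<Rightarrow> [] | Nd n \<Rightarrow> [n]) = (case v of Root \<Rightarrow> {} | Nd n \<Rightarrow> {n})"
    by (cases v) simp_all
  show ?case
    unfolding trav.simps set_append set_concat set_map image_image side self descendants_unfold[of T v]
    by (simp add: Un_ac)
qed

lemma distinct_concat_map_disjoint:
  "distinct cs \<Longrightarrow> (\<forall>c\<in>set cs. distinct (g c)) \<Longrightarrow>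
   (\<forall>c\<in>set cs. \<forall>c'\<in>set cs. c \<noteq> c' \<longrightarrow> set (g c) \<inter> set (g c') = {}) \<Longrightarrow>
   distinct (concat (map g cs))"
  by (induction cs) auto

lemma distinct_trav:
  assumes T: "ranked_tree T \<rho>"
  shows "distinct (trav a xs T f v)"
proof (induction f arbitrary: v)
  case (Suc f)
  have fin: "finite (dom T)" using ranked_tree_finite[OF T] .
  have sub: "set (trav a xs T f (Nd c)) \<subseteq> descendants T (Nd c)" for c
    using trav_subset_descendants[OF fin] .
  have disj: "set (trav a xs T f (Nd c)) \<inter> set (trav a xs T f (Nd c')) = {}"
    if "c \<in> children T v s" "c' \<in> children T v s'" "c \<noteq> c'" for c c' s s'
    using children_descendants_disjoint[OF T children_edge[OF that(1)] children_edge[OF that(2)] that(3)] sub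
    by blast
  have side: "distinct (concat (map (\<lambda>c. trav a xs T f (Nd c)) (kids a xs T v s)))" for s
    by (rule distinct_concat_map_disjoint) (use Suc.IH set_kids[OF fin] disj in auto)
  have LR: "set (trav a xs T f (Nd c)) \<inter> set (trav a xs T f (Nd c')) = {}"
    if "c \<in> children T v L" "c' \<in> children T v R" for c c'
    using disj[OF that] children_side_unique[of c T v L R] that by auto
  have self: "n \<notin> set (trav a xs T f (Nd c))" if "v = Nd n" "c \<in> children T v s" for n c s
    using not_in_child_descendants[OF T] children_edge sub that by blast
  show ?case
    using side[of L] side[of R] LR self set_kids(1)[OF fin] by (cases v) (fastforce simp: disjoint_iff)+
qed simp

lemma sublist_concat_map: "x \<in> set xs \<Longrightarrow> sublist (h x) (concat (map h xs))"
  by (metis concat_append concat.simps(2) list.simps(9) map_append split_list sublist_appendI)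

lemma sublist_trav_child:
  assumes "c \<in> set (kids a xs T v s)"
  shows "sublist (trav a xs T f (Nd c)) (trav a xs T (Suc f) v)"
proof -
  have "sublist (concat (map (\<lambda>c. trav a xs T f (Nd c)) (kids a xs T v s))) (trav a xs T (Suc f) v)"
    by (cases s) (simp_all, metis append.assoc sublist_append_leftI)
  then show ?thesis using sublist_concat_map[OF assms] sublist_order.order_trans by blast
qed

lemma sublist_trav_descendant:
  assumes T: "ranked_tree T \<rho>"
  shows "subtree_size T v \<le> f \<Longrightarrow> m \<in> descendants T v \<Longrightarrow>
    \<exists>g. subtree_size T (Nd m) \<le> g \<and> sublist (trav a xs T g (Nd m)) (trav a xs T f v)"
proof (induction f arbitrary: v)
  case 0
  then show ?case using subtree_size_pos[OF T, of v] by simp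
next
  case (Suc f)
  show ?case
  proof (cases "v = Nd m")
    case True
    then show ?thesis using Suc.prems(1) by blast
  next
    case False
    then obtain c s where c: "c \<in> children T v s" "m \<in> descendants T (Nd c)"
      using Suc.prems(2) descendants_unfold[of T v] by (cases v) auto
    have "subtree_size T (Nd c) \<le> f" using subtree_size_child[OF T c(1)] Suc.prems(1) by simp
    then obtain g where "subtree_size T (Nd m) \<le> g" "sublist (trav a xs T g (Nd m)) (trav a xs T f (Nd c))"
      using Suc.IH c(2) by blast
    moreover have "sublist (trav a xs T f (Nd c)) (trav a xs T (Suc f) v)"
      using c(1) set_kids(1)[OF ranked_tree_finite[OF T]] sublist_trav_child by blast
    ultimately show ?thesis using sublist_order.order_trans by blast
  qed
qed

lemma hd_trav_walk_up:
  assumes T: "ranked_tree T \<rho>"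
  shows "subtree_size T (Nd c) \<le> f \<Longrightarrow> walk_up T c w \<Longrightarrow>
    trav a xs T f (Nd c) \<noteq> [] \<and> walk_up T (hd (trav a xs T f (Nd c))) w"
proof (induction f arbitrary: c)
  case 0
  then show ?case using subtree_size_pos[OF T, of "Nd c"] by simp
next
  case (Suc f)
  show ?case
  proof (cases "kids a xs T (Nd c) L")
    case Nil
    then show ?thesis using Suc.prems(2) by simp
  next
    case (Cons c' cs)
    then have c': "c' \<in> children T (Nd c) L"
      using set_kids(1)[OF ranked_tree_finite[OF T], of a xs "Nd c" L] by auto
    then obtain nd where "T c' = Some nd" "side nd = L" "parent nd = Nd c" by (auto simp: children_def)
    then have "walk_up T c' w" using Suc.prems(2) by (rule walk_up.left)
    moreover have "subtree_size T (Nd c') \<le> f" using subtree_size_child[OF T c'] Suc.prems(1) by simp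
    ultimately show ?thesis using Suc.IH Cons by simp
  qed
qed

lemma hd_right_subtrees_walk_up:
  fixes a :: alg and xs :: "nid list"
  assumes T: "ranked_tree T \<rho>" and f: "subtree_size T v \<le> Suc f" and R: "children T v R \<noteq> {}"
  defines "V \<equiv> concat (map (\<lambda>c. trav a xs T f (Nd c)) (kids a xs T v R))"
  shows "V \<noteq> [] \<and> walk_up T (hd V) v"
proof -
  obtain c cs where kids: "kids a xs T v R = c # cs"
    using R set_kids(1)[OF ranked_tree_finite[OF T], of a xs v R] by (cases "kids a xs T v R") auto
  then have c: "c \<in> children T v R" using set_kids(1)[OF ranked_tree_finite[OF T], of a xs v R] by auto
  then obtain nd where "T c = Some nd" "side nd = R" "parent nd = v" by (auto simp: children_def)
  then have "walk_up T c v" using walk_up.right by metis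
  moreover have "subtree_size T (Nd c) \<le> f" using subtree_size_child[OF T c] f by simp
  ultimately show ?thesis using hd_trav_walk_up[OF T] kids by (simp add: V_def)
qed

section \<open>The list order\<close>

lemma pos_Cons: "pos (x # xs) a = (if x = a then 0 else Suc (pos xs a))"
  by (simp add: pos_def)

lemma pos_nth: "a \<in> set xs \<Longrightarrow> pos xs a < length xs \<and> xs ! pos xs a = a"
  by (induction xs) (auto simp: pos_Cons)

lemma pos_append_Cons: "a \<notin> set U \<Longrightarrow> pos (U @ a # V) a = length U"
  by (induction U) (auto simp: pos_Cons)

lemma pos_append_in: "b \<in> set U \<Longrightarrow> pos (U @ W) b < length U"
  by (induction U) (auto simp: pos_Cons)

lemma pos_nth_distinct: "distinct xs \<Longrightarrow> i < length xs \<Longrightarrow> pos xs (xs ! i) = i"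
  by (induction xs arbitrary: i) (auto simp: pos_Cons less_Suc_eq_0_disj nth_eq_iff_index_eq)

lemma pos_filter_le_iff:
  "a \<in> set xs \<Longrightarrow> b \<in> set xs \<Longrightarrow> P a \<Longrightarrow> P b \<Longrightarrow>
   pos (filter P xs) a \<le> pos (filter P xs) b \<longleftrightarrow> pos xs a \<le> pos xs b"
  by (induction xs) (auto simp: pos_Cons)

lemma sort_key_cong_order:
  "(\<forall>x\<in>set xs. \<forall>y\<in>set xs. f x \<le> f y \<longleftrightarrow> g x \<le> g y) \<Longrightarrow> sort_key f xs = sort_key g xs"
proof (induction xs)
  case (Cons x xs)
  have insort: "insort_key f x ys = insort_key g x ys" if "set ys \<subseteq> set (x # xs)" for ys
    using that Cons.prems by (induction ys) auto
  have "insort_key f x (sort_key g xs) = insort_key g x (sort_key g xs)" by (rule insort) auto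
  moreover have "sort_key f xs = sort_key g xs" using Cons by simp
  ultimately show ?case by simp
qed simp

lemma sorted_list_of_set_filter:
  assumes "finite A"
  shows "sorted_list_of_set {x \<in> A. P x} = filter P (sorted_list_of_set A)"
proof -
  have "{x \<in> A. P x} = set (filter P (sorted_list_of_set A))" using assms by auto
  moreover have "sorted (filter P (sorted_list_of_set A))"
    using sorted_filter[of "\<lambda>x. x" "sorted_list_of_set A" P] by simp
  ultimately show ?thesis
    using sorted_list_of_set.idem_if_sorted_distinct by (metis distinct_filter distinct_sorted_list_of_set)
qed

definition parent_closed :: "'v tree \<Rightarrow> nid set \<Rightarrow> bool" where
  "parent_closed T S \<longleftrightarrow> (\<forall>n nd p. T n = Some nd \<longrightarrow> n \<in> S \<longrightarrow> parent nd = Nd p \<longrightarrow> p \<in> S)"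

lemma parent_closed_ancestor:
  assumes S: "parent_closed T S" and path: "(Nd c, Nd m) \<in> (tree_edges T)\<^sup>*" and m: "m \<in> S"
  shows "c \<in> S"
proof -
  have "\<forall>c. x = Nd c \<longrightarrow> c \<in> S" if "(x, Nd m) \<in> (tree_edges T)\<^sup>*" for x
    using that
  proof (induction rule: converse_rtrancl_induct)
    case (step x y)
    then obtain k nd where "y = Nd k" "T k = Some nd" "parent nd = x" by (auto simp: tree_edges_iff)
    then show ?case using step.IH S unfolding parent_closed_def by blast
  qed (simp add: m)
  then show ?thesis using path by blast
qed

lemma kids_restrict_map:
  assumes "finite (dom T)"
  shows "kids a xs (T |` S) v s = filter (\<lambda>m. m \<in> S) (kids a xs T v s)"
proof -
  have "finite (children T v s)" using finite_children[OF assms] .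
  moreover have "children (T |` S) v s = {n \<in> children T v s. n \<in> S}"
    by (auto simp: children_def restrict_map_def)
  ultimately have sorted: "sorted_list_of_set (children (T |` S) v s)
      = filter (\<lambda>m. m \<in> S) (sorted_list_of_set (children T v s))"
    by (simp add: sorted_list_of_set_filter)
  show ?thesis
  proof (cases "a = FugueMax \<and> s = R")
    case True
    define cs where "cs = filter (\<lambda>m. m \<in> S) (sorted_list_of_set (children T v s))"
    have "sort_key (\<lambda>n. (case rorig (the ((T |` S) n)) of None \<Rightarrow> 0 | Some m \<Rightarrow> length xs - pos xs m, n)) cs
        = sort_key (\<lambda>n. (case rorig (the (T n)) of None \<Rightarrow> 0 | Some m \<Rightarrow> length xs - pos xs m, n)) cs"
      by (intro sort_key_cong_order) (auto simp: cs_def restrict_map_def)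
    then show ?thesis
      unfolding kids_def Let_def if_P[OF True] children_def[symmetric] sorted cs_def by (simp add: filter_sort)
  next
    case False
    show ?thesis unfolding kids_def Let_def if_not_P[OF False] children_def[symmetric] sorted by (rule refl)
  qed
qed

lemma filter_trav_restrict_map:
  assumes fin: "finite (dom T)" and S: "parent_closed T S"
  shows "(\<And>n. v = Nd n \<Longrightarrow> n \<in> S) \<Longrightarrow>
    filter (\<lambda>m. m \<in> S) (trav a xs T f v) = trav a xs (T |` S) f v"
proof (induction f arbitrary: v)
  case (Suc f)
  have outside: "filter (\<lambda>m. m \<in> S) (trav a xs T f (Nd c)) = []" if "c \<notin> S" for c
  proof -
    have "m \<notin> S" if "m \<in> set (trav a xs T f (Nd c))" for m
      using that trav_subset_descendants[OF fin] parent_closed_ancestor[OF S, of c m] \<open>c \<notin> S\<close>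
      unfolding descendants_def by blast
    then show ?thesis by (simp add: filter_empty_conv)
  qed
  have inside: "filter (\<lambda>m. m \<in> S) (trav a xs T f (Nd c)) = trav a xs (T |` S) f (Nd c)"
    if "c \<in> S" for c
    using Suc.IH[of "Nd c"] that by blast
  have "concat (map (\<lambda>c. filter (\<lambda>m. m \<in> S) (trav a xs T f (Nd c))) cs)
      = concat (map (\<lambda>c. trav a xs (T |` S) f (Nd c)) (filter (\<lambda>m. m \<in> S) cs))" for cs
    by (induction cs) (simp_all add: inside outside)
  then have side: "filter (\<lambda>m. m \<in> S) (concat (map (\<lambda>c. trav a xs T f (Nd c)) (kids a xs T v s)))
     = concat (map (\<lambda>c. trav a xs (T |` S) f (Nd c)) (kids a xs (T |` S) v s))" for s
    unfolding filter_concat map_map kids_restrict_map[OF fin] by (simp add: comp_def)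
  have self: "filter (\<lambda>m. m \<in> S) (case v of Root \<Rightarrow> [] | Nd n \<Rightarrow> [n]) = (case v of Root \<Rightarrow> [] | Nd n \<Rightarrow> [n])"
    using Suc.prems by (cases v) auto
  show ?case by (simp only: trav.simps filter_append side self)
qed simp

lemma trav_cong_kids:
  "(\<And>w s. kids a xs T w s = kids a xs' T w s) \<Longrightarrow> trav a xs T f v = trav a xs' T f v"
  by (induction f arbitrary: v) simp_all

lemma rorig_key_le_cong:
  assumes M: "M \<subseteq> set xs" "M \<subseteq> set xs'" and order: "filter (\<lambda>m. m \<in> M) xs = filter (\<lambda>m. m \<in> M) xs'"
    and ro: "set_option ro \<subseteq> M" "set_option ro' \<subseteq> M"
  shows "(case ro of None \<Rightarrow> 0 | Some m \<Rightarrow> length xs - pos xs m)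
      \<le> (case ro' of None \<Rightarrow> 0 | Some m \<Rightarrow> length xs - pos xs m) \<longleftrightarrow>
    (case ro of None \<Rightarrow> 0 | Some m \<Rightarrow> length xs' - pos xs' m)
      \<le> (case ro' of None \<Rightarrow> 0 | Some m \<Rightarrow> length xs' - pos xs' m)"
proof (cases ro)
  case (Some m1)
  have pos_less: "pos ys m < length ys" if "m \<in> M" "M \<subseteq> set ys" for m ys
    using pos_nth[of m ys] subsetD[OF that(2,1)] by simp
  have m1: "m1 \<in> M" using ro(1) Some by simp
  show ?thesis
  proof (cases ro')
    case None
    then show ?thesis using Some pos_less[OF m1 M(1)] pos_less[OF m1 M(2)] by simp
  next
    case (Some m2)
    have m2: "m2 \<in> M" using ro(2) Some by simp
    have "pos xs m2 \<le> pos xs m1 \<longleftrightarrow> pos xs' m2 \<le> pos xs' m1"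
      using pos_filter_le_iff[of m2 xs m1 "\<lambda>m. m \<in> M"] pos_filter_le_iff[of m2 xs' m1 "\<lambda>m. m \<in> M"]
        m1 m2 M order by auto
    then show ?thesis
      using \<open>ro = Some m1\<close> Some pos_less[OF m1 M(1)] pos_less[OF m1 M(2)]
        pos_less[OF m2 M(1)] pos_less[OF m2 M(2)] by auto
  qed
qed simp

lemma kids_cong_rorig_order:
  assumes fin: "finite (dom T)"
    and rorig: "\<And>n nd m. T n = Some nd \<Longrightarrow> side nd = R \<Longrightarrow> rorig nd = Some m \<Longrightarrow> m \<in> M"
    and M: "M \<subseteq> set xs" "M \<subseteq> set xs'"
    and order: "filter (\<lambda>m. m \<in> M) xs = filter (\<lambda>m. m \<in> M) xs'"
  shows "kids a xs T v s = kids a xs' T v s"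
proof (cases "a = FugueMax \<and> s = R")
  case True
  define key where "key ys n = (case rorig (the (T n)) of None \<Rightarrow> 0 | Some m \<Rightarrow> length ys - pos ys m)"
    for ys :: "nid list" and n
  have in_M: "set_option (rorig (the (T z))) \<subseteq> M" if "z \<in> children T v R" for z
  proof -
    from that obtain nd where "T z = Some nd" "side nd = R" by (auto simp: children_def)
    then show ?thesis using rorig[of z nd] by auto
  qed
  have key_iff: "key xs x \<le> key xs y \<longleftrightarrow> key xs' x \<le> key xs' y"
    if "x \<in> children T v R" "y \<in> children T v R" for x y
    unfolding key_def using rorig_key_le_cong[OF M order in_M[OF that(1)] in_M[OF that(2)]] .
  have "((key xs x, x) \<le> (key xs y, y)) \<longleftrightarrow> ((key xs' x, x) \<le> (key xs' y, y))"
    if "x \<in> children T v R" "y \<in> children T v R" for x y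
  proof -
    have "key xs x < key xs y \<longleftrightarrow> key xs' x < key xs' y"
      using key_iff[OF that(2,1)] by (simp add: not_le[symmetric])
    then show ?thesis using key_iff[OF that] unfolding less_eq_prod_def by simp
  qed
  then have "sort_key (\<lambda>n. (key xs n, n)) cs = sort_key (\<lambda>n. (key xs' n, n)) cs"
    if "set cs = children T v R" for cs
    using that by (intro sort_key_cong_order) auto
  moreover have "set (sorted_list_of_set (children T v R)) = children T v R"
    using finite_children[OF fin] by simp
  ultimately show ?thesis
    using True unfolding kids_def Let_def children_def[symmetric] key_def by simp
next
  case False
  then show ?thesis unfolding kids_def Let_def by auto
qed

(* The sibling order among the nodes of rank at most k consults only the list positions of their
   right origins, which have rank below k.  Hence the traversal fixes the order of ever larger
   rank levels, which gives existence and uniqueness of the list order. *)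
lemma filter_trav_rank_step:
  assumes T: "ranked_tree T \<rho>" and xs: "set xs = dom T" "set xs' = dom T"
    and below: "filter (\<lambda>m. \<rho> m < k) xs = filter (\<lambda>m. \<rho> m < k) xs'"
  shows "filter (\<lambda>m. \<rho> m < Suc k) (trav a xs T f Root) = filter (\<lambda>m. \<rho> m < Suc k) (trav a xs' T f Root)"
proof -
  define S where "S = {m. \<rho> m < Suc k}"
  define M where "M = {m \<in> dom T. \<rho> m < k}"
  have fin: "finite (dom T)" using ranked_tree_finite[OF T] .
  have closed: "parent_closed T S"
    using ranked_tree_parent[OF T] by (fastforce simp: parent_closed_def S_def)
  have restrict: "filter (\<lambda>m. m \<in> S) (trav a ys T f Root) = trav a ys (T |` S) f Root" for ys
    using filter_trav_restrict_map[OF fin closed, of Root] by simp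
  have M_filter: "filter (\<lambda>m. m \<in> M) ys = filter (\<lambda>m. \<rho> m < k) ys" if "set ys = dom T" for ys
    using that by (intro filter_cong) (auto simp: M_def)
  have "kids a xs (T |` S) w s = kids a xs' (T |` S) w s" for w s
  proof (rule kids_cong_rorig_order[where M = M])
    show "finite (dom (T |` S))" using fin by simp
    show "m \<in> M" if "(T |` S) n = Some nd" "side nd = R" "rorig nd = Some m" for n nd m
    proof -
      from that(1) have "T n = Some nd" "\<rho> n < Suc k" by (auto simp: S_def restrict_map_def split: if_splits)
      then show ?thesis using ranked_tree_rorig[OF T \<open>T n = Some nd\<close> that(3)] by (simp add: M_def)
    qed
    show "M \<subseteq> set xs" "M \<subseteq> set xs'" using xs by (auto simp: M_def)
    show "filter (\<lambda>m. m \<in> M) xs = filter (\<lambda>m. m \<in> M) xs'"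
      using below M_filter xs by simp
  qed
  then have "trav a xs (T |` S) f Root = trav a xs' (T |` S) f Root" by (rule trav_cong_kids)
  then show ?thesis using restrict unfolding S_def by simp
qed

lemma filter_rank_below_Max:
  assumes "ranked_tree T \<rho>" "set ys = dom T"
  shows "filter (\<lambda>m. \<rho> m < Suc (Max (\<rho> ` dom T))) ys = ys"
  using assms ranked_tree_finite[OF assms(1)] by (simp add: filter_id_conv le_imp_less_Suc)

lemma trav_Root_fixpoint_unique:
  assumes T: "ranked_tree T \<rho>" and f: "subtree_size T Root \<le> f"
    and fixpoint: "xs = trav a xs T f Root" "xs' = trav a xs' T f Root"
  shows "xs = xs'"
proof -
  have set: "set xs = dom T" "set xs' = dom T"
    using set_trav[OF T f] descendants_Root[OF T] fixpoint by metis+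
  have "filter (\<lambda>m. \<rho> m < k) xs = filter (\<lambda>m. \<rho> m < k) xs'" for k
  proof (induction k)
    case (Suc k)
    then show ?case using filter_trav_rank_step[OF T set Suc] fixpoint by metis
  qed simp
  then show ?thesis using filter_rank_below_Max[OF T] set by metis
qed

lemma trav_Root_fixpoint_exists:
  assumes T: "ranked_tree T \<rho>" and f: "subtree_size T Root \<le> f"
  shows "\<exists>xs. xs = trav a xs T f Root"
proof -
  define F where "F xs = trav a xs T f Root" for xs
  define Y where "Y k = (F ^^ Suc k) []" for k
  have set_F: "set (F xs) = dom T" for xs
    using set_trav[OF T f] descendants_Root[OF T] by (simp add: F_def)
  have Y_Suc: "Y (Suc k) = F (Y k)" for k by (simp add: Y_def)
  have set_Y: "set (Y k) = dom T" for k by (simp add: Y_def set_F)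
  have stable: "filter (\<lambda>m. \<rho> m < k) (Y k) = filter (\<lambda>m. \<rho> m < k) (Y (Suc k))" for k
  proof (induction k)
    case (Suc k)
    have "filter (\<lambda>m. \<rho> m < Suc k) (Y (Suc k)) = filter (\<lambda>m. \<rho> m < Suc k) (trav a (Y k) T f Root)"
      by (simp only: Y_Suc[of k] F_def)
    also have "\<dots> = filter (\<lambda>m. \<rho> m < Suc k) (trav a (Y (Suc k)) T f Root)"
      by (rule filter_trav_rank_step[OF T set_Y set_Y Suc])
    also have "\<dots> = filter (\<lambda>m. \<rho> m < Suc k) (Y (Suc (Suc k)))"
      by (simp only: Y_Suc[of "Suc k"] F_def)
    finally show ?case .
  qed simp
  define K where "K = Suc (Max (\<rho> ` dom T))"
  have "Y K = F (Y K)"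
    using stable[of K] filter_rank_below_Max[OF T] set_Y Y_Suc unfolding K_def by metis
  then show ?thesis unfolding F_def by blast
qed

lemma list_order_fixpoint:
  assumes T: "ranked_tree T \<rho>"
  shows "list_order a T = trav a (list_order a T) T (Suc (card (dom T))) Root"
proof -
  have f: "subtree_size T Root \<le> Suc (card (dom T))" using subtree_size_Root[OF T] by simp
  show ?thesis unfolding list_order_def
    by (rule theI') (use trav_Root_fixpoint_exists[OF T f] trav_Root_fixpoint_unique[OF T f] in blast)
qed

lemma set_list_order: "ranked_tree T \<rho> \<Longrightarrow> set (list_order a T) = dom T"
  using set_trav[of T \<rho> Root "Suc (card (dom T))"] list_order_fixpoint subtree_size_Root descendants_Root
  by (metis order_refl)

lemma distinct_list_order: "ranked_tree T \<rho> \<Longrightarrow> distinct (list_order a T)"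
  using distinct_trav list_order_fixpoint by metis

lemma list_order_split_subtree:
  assumes T: "ranked_tree T \<rho>" and m: "m \<in> dom T"
  shows "\<exists>P Q g. subtree_size T (Nd m) \<le> Suc g \<and>
    list_order a T = P @ trav a (list_order a T) T (Suc g) (Nd m) @ Q"
proof -
  have "m \<in> descendants T Root" using descendants_Root[OF T] m by simp
  then obtain P Q g where PQ: "subtree_size T (Nd m) \<le> g"
      "list_order a T = P @ trav a (list_order a T) T g (Nd m) @ Q"
    using sublist_trav_descendant[OF T, of Root "Suc (card (dom T))"] list_order_fixpoint[OF T]
      subtree_size_Root[OF T] unfolding sublist_def by (metis order_refl)
  moreover obtain g' where "g = Suc g'" using PQ(1) subtree_size_pos[OF T, of "Nd m"] by (cases g) auto
  ultimately show ?thesis by blast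
qed

lemma list_order_successor_walk_up:
  fixes a :: alg
  assumes T: "ranked_tree T \<rho>" and l: "l \<in> dom T" and R: "children T (Nd l) R \<noteq> {}"
  defines "xs \<equiv> list_order a T"
  shows "Suc (pos xs l) < length xs \<and> walk_up T (xs ! Suc (pos xs l)) (Nd l)"
proof -
  obtain P Q g where PQ: "subtree_size T (Nd l) \<le> Suc g" "xs = P @ trav a xs T (Suc g) (Nd l) @ Q"
    using list_order_split_subtree[OF T l] unfolding xs_def by blast
  define U where "U = P @ concat (map (\<lambda>c. trav a xs T g (Nd c)) (kids a xs T (Nd l) L))"
  define V where "V = concat (map (\<lambda>c. trav a xs T g (Nd c)) (kids a xs T (Nd l) R))"
  have V: "V \<noteq> [] \<and> walk_up T (hd V) (Nd l)"
    using hd_right_subtrees_walk_up[OF T PQ(1) R] unfolding V_def .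
  have xs_split: "xs = U @ l # V @ Q" using PQ(2) by (simp add: U_def V_def)
  moreover have "distinct xs" using distinct_list_order[OF T] by (simp add: xs_def)
  ultimately have "l \<notin> set U" by simp
  then have "pos xs l = length U" using xs_split pos_append_Cons by metis
  then show ?thesis using xs_split V by (cases V) (simp_all add: nth_append)
qed

lemma list_order_hd_walk_up:
  assumes T: "ranked_tree T \<rho>" and R: "children T Root R \<noteq> {}"
  shows "list_order a T \<noteq> [] \<and> walk_up T (hd (list_order a T)) Root"
proof -
  define xs where "xs = list_order a T"
  have "children T Root L = {}" using ranked_tree_Root_child[OF T] by (auto simp: children_def)
  then have "kids a xs T Root L = []" using set_kids(1)[OF ranked_tree_finite[OF T], of a xs Root L] by simp
  then have "xs = concat (map (\<lambda>c. trav a xs T (card (dom T)) (Nd c)) (kids a xs T Root R))"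
    using list_order_fixpoint[OF T, of a] by (simp add: xs_def)
  then show ?thesis
    using hd_right_subtrees_walk_up[OF T _ R] subtree_size_Root[OF T] unfolding xs_def by (metis order_refl)
qed

lemma list_order_left_descendant_before:
  assumes T: "ranked_tree T \<rho>" and c: "c \<in> children T (Nd A) L" and B: "B \<in> descendants T (Nd c)"
  shows "\<exists>U V. list_order a T = U @ A # V \<and> B \<in> set U"
proof -
  define xs where "xs = list_order a T"
  obtain nd where "T c = Some nd" "parent nd = Nd A" using c by (auto simp: children_def)
  then have A: "A \<in> dom T" using ranked_tree_parent[OF T] by blast
  obtain P Q g where PQ: "subtree_size T (Nd A) \<le> Suc g" "xs = P @ trav a xs T (Suc g) (Nd A) @ Q"
    using list_order_split_subtree[OF T A] unfolding xs_def by blast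
  define U where "U = P @ concat (map (\<lambda>c. trav a xs T g (Nd c)) (kids a xs T (Nd A) L))"
  have "set (trav a xs T g (Nd c)) = descendants T (Nd c)"
    using set_trav[OF T] subtree_size_child[OF T c] PQ(1) by simp
  then have "B \<in> set U"
    using B c set_kids(1)[OF ranked_tree_finite[OF T]] by (auto simp: U_def)
  moreover have "xs = U @ A # concat (map (\<lambda>c. trav a xs T g (Nd c)) (kids a xs T (Nd A) R)) @ Q"
    using PQ(2) by (simp add: U_def)
  ultimately show ?thesis unfolding xs_def by blast
qed

lemma lo_less_not_left_descendant:
  assumes T: "ranked_tree T \<rho>" and less: "lo_less a T A B"
    and c: "c \<in> children T (Nd A) L"
  shows "B \<notin> descendants T (Nd c)"
proof
  assume "B \<in> descendants T (Nd c)"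
  then obtain U V where UV: "list_order a T = U @ A # V" "B \<in> set U"
    using list_order_left_descendant_before[OF T c] by blast
  have distinct: "distinct (list_order a T)" using distinct_list_order[OF T] .
  from less obtain i j where "i < j" "j < length (list_order a T)"
    "list_order a T ! i = A" "list_order a T ! j = B" unfolding lo_less_def by blast
  then have "pos (list_order a T) A < pos (list_order a T) B"
    using pos_nth_distinct[OF distinct] by auto
  moreover have "A \<notin> set U" using distinct UV(1) by simp
  ultimately show False using UV(1) pos_append_Cons[of A U V] pos_append_in[OF UV(2), of "A # V"] by simp
qed

section \<open>Walking up the tree\<close>

lemma walk_up_trancl: "walk_up T d w \<Longrightarrow> (w, Nd d) \<in> (tree_edges T)\<^sup>+"
proof (induction rule: walk_up.induct)
  case (right d nd)
  then show ?case by (auto simp: tree_edges_iff)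
next
  case (left d nd p w)
  then have "(Nd p, Nd d) \<in> tree_edges T" by (auto simp: tree_edges_iff)
  with left.IH show ?case by (rule trancl_into_trancl)
qed

lemma lo_edges_trancl_subset:
  assumes "\<And>D nd. T D = Some nd \<Longrightarrow> walk_up T D (lorig nd)"
  shows "(lo_edges T)\<^sup>+ \<subseteq> (tree_edges T)\<^sup>+"
proof -
  have "lo_edges T \<subseteq> (tree_edges T)\<^sup>+" unfolding lo_edges_def using assms walk_up_trancl by blast
  then show ?thesis using trancl_mono trancl_id[OF trans_trancl] by blast
qed

lemma parent_in_descendants:
  assumes "(Nd c, Nd d) \<in> (tree_edges T)\<^sup>*" "c \<noteq> d" "T d = Some nd"
  shows "\<exists>p. parent nd = Nd p \<and> p \<in> descendants T (Nd c)"
  using assms(1)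
proof (cases rule: rtranclE)
  case base
  then show ?thesis using assms(2) by simp
next
  case (step y)
  then have y: "y = parent nd" using assms(3) by (auto simp: tree_edges_iff)
  show ?thesis
  proof (cases y)
    case Root
    from step(1) show ?thesis unfolding Root by (cases rule: rtranclE) (auto simp: tree_edges_iff)
  next
    case (Nd p)
    then show ?thesis using y step(1) by (simp add: descendants_def)
  qed
qed

lemma walk_up_from_right_subtree:
  assumes T: "ranked_tree T \<rho>" and c: "c \<in> children T (Nd A) R"
  shows "walk_up T d w \<Longrightarrow> d \<in> descendants T (Nd c) \<Longrightarrow>
    w = Nd A \<or> (\<exists>X. w = Nd X \<and> X \<in> descendants T (Nd c) \<and> \<rho> X < \<rho> d)"
proof (induction rule: walk_up.induct)
  case (right d nd)
  show ?case
  proof (cases "c = d")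
    case True
    then show ?thesis using right.hyps c by (auto simp: children_def)
  next
    case False
    with right.prems obtain p where "parent nd = Nd p" "p \<in> descendants T (Nd c)"
      using parent_in_descendants right.hyps(1) by (fastforce simp: descendants_def)
    then show ?thesis using ranked_tree_parent[OF T right.hyps(1)] by simp
  qed
next
  case (left d nd p w)
  have "c \<noteq> d" using left.hyps c by (auto simp: children_def)
  then have "p \<in> descendants T (Nd c)"
    using parent_in_descendants left.hyps(1,3) left.prems by (fastforce simp: descendants_def)
  then show ?case using left.IH ranked_tree_parent[OF T left.hyps(1,3)] by auto
qed

lemma right_subtree_lo_descendants:
  assumes T: "ranked_tree T \<rho>" and walk: "\<And>D nd. T D = Some nd \<Longrightarrow> walk_up T D (lorig nd)"
    and c: "c \<in> children T (Nd A) R"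
  shows "B \<in> descendants T (Nd c) \<Longrightarrow> (Nd A, Nd B) \<in> (lo_edges T)\<^sup>+"
proof (induction "\<rho> B" arbitrary: B rule: less_induct)
  case less
  have "B \<in> dom T" using descendants_in_dom[OF less.prems] c by (auto simp: children_def)
  then obtain nd where nd: "T B = Some nd" by auto
  then have edge: "(lorig nd, Nd B) \<in> lo_edges T" by (auto simp: lo_edges_iff)
  from walk_up_from_right_subtree[OF T c walk[OF nd] less.prems]
  show ?case
  proof
    assume "lorig nd = Nd A"
    then show ?thesis using edge by auto
  next
    assume "\<exists>X. lorig nd = Nd X \<and> X \<in> descendants T (Nd c) \<and> \<rho> X < \<rho> B"
    then obtain X where X: "lorig nd = Nd X" "X \<in> descendants T (Nd c)" "\<rho> X < \<rho> B" by blast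
    then have "(Nd A, Nd X) \<in> (lo_edges T)\<^sup>+" using less.hyps by blast
    then show ?thesis using edge X(1) by (metis trancl_into_trancl)
  qed
qed

lemma tree_descendant_imp_lo_descendant:
  assumes T: "ranked_tree T \<rho>" and walk: "\<And>D nd. T D = Some nd \<Longrightarrow> walk_up T D (lorig nd)"
    and less: "lo_less a T A B" and desc: "(Nd A, Nd B) \<in> (tree_edges T)\<^sup>+"
  shows "(Nd A, Nd B) \<in> (lo_edges T)\<^sup>+"
proof -
  obtain c s where c: "c \<in> children T (Nd A) s" "B \<in> descendants T (Nd c)"
    using tree_edges_trancl_child[OF desc] .
  then show ?thesis
    using right_subtree_lo_descendants[OF T walk] lo_less_not_left_descendant[OF T less]
    by (cases s) auto
qed

section \<open>Inserting a node\<close>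

(* The last two conjuncts say that, once nd is added to T, walking up from nd reaches lorig nd. *)
definition well_placed :: "'v tree \<Rightarrow> 'v node \<Rightarrow> bool" where
  "well_placed T nd \<longleftrightarrow>
     (\<forall>p. parent nd = Nd p \<longrightarrow> p \<in> dom T) \<and> (\<forall>m. rorig nd = Some m \<longrightarrow> m \<in> dom T) \<and>
     (parent nd = Root \<longrightarrow> side nd = R) \<and> (side nd = R \<longrightarrow> lorig nd = parent nd) \<and>
     (side nd = L \<longrightarrow> (\<exists>p. parent nd = Nd p \<and> walk_up T p (lorig nd)))"

definition right_origin :: "nid list \<Rightarrow> nref \<Rightarrow> nid option" where
  "right_origin xs lo = (case lo of Root \<Rightarrow> (if xs = [] then None else Some (hd xs))
     | Nd l \<Rightarrow> (if Suc (pos xs l) < length xs then Some (xs ! Suc (pos xs l)) else None))"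

lemma right_origin_in_set: "right_origin xs lo = Some m \<Longrightarrow> m \<in> set xs"
  by (auto simp: right_origin_def split: nref.splits if_splits)

lemma right_origin_walk_up:
  assumes T: "ranked_tree T \<rho>" and lo: "\<And>l. lo = Nd l \<Longrightarrow> l \<in> dom T" and R: "children T lo R \<noteq> {}"
  shows "\<exists>h. right_origin (list_order a T) lo = Some h \<and> walk_up T h lo"
proof (cases lo)
  case Root
  then show ?thesis using list_order_hd_walk_up[OF T, of a] R by (simp add: right_origin_def)
next
  case (Nd l)
  then show ?thesis
    using list_order_successor_walk_up[OF T lo[OF Nd], of a] R by (simp add: right_origin_def)
qed

lemma ins_node_well_placed:
  fixes C :: "'v conf"
  assumes T: "ranked_tree (trees C r) \<rho>" and i: "i \<le> length (visible a (trees C r))"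
  shows "well_placed (trees C r) (ins_node a r i x C)"
proof -
  define T where "T = trees C r"
  define lo where "lo = (if i = 0 then Root else Nd (visible a T ! (i - 1)))"
  define ro where "ro = right_origin (list_order a T) lo"
  have node: "ins_node a r i x C = (if children T lo R = {}
      then \<lparr>val = Some x, parent = lo, side = R, rorig = ro, lorig = lo\<rparr>
      else \<lparr>val = Some x, parent = Nd (the ro), side = L, rorig = ro, lorig = lo\<rparr>)"
    by (simp add: ins_node_def Let_def T_def lo_def ro_def right_origin_def children_def)
  have T: "ranked_tree T \<rho>" using T by (simp add: T_def)
  have lo_dom: "l \<in> dom T" if "lo = Nd l" for l
  proof -
    have "l \<in> set (visible a T)" using that i by (auto simp: lo_def T_def split: if_splits)
    then show ?thesis using set_list_order[OF T] by (auto simp: visible_def)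
  qed
  have ro_dom: "m \<in> dom T" if "ro = Some m" for m
    using right_origin_in_set[OF that[unfolded ro_def]] set_list_order[OF T] by simp
  show ?thesis
  proof (cases "children T lo R = {}")
    case True
    then show ?thesis using lo_dom ro_dom unfolding well_placed_def T_def[symmetric] node by auto
  next
    case False
    then obtain h where "ro = Some h" "walk_up T h lo"
      using right_origin_walk_up[OF T lo_dom] unfolding ro_def by blast
    then show ?thesis using False ro_dom unfolding well_placed_def T_def[symmetric] node by auto
  qed
qed

section \<open>The execution invariant\<close>

abbreviation msg_at :: "'v conf \<Rightarrow> nat \<Rightarrow> 'v msg" where
  "msg_at C k \<equiv> fst (snd (sent C ! k))"

abbreviation deps_at :: "'v conf \<Rightarrow> nat \<Rightarrow> nat set" where
  "deps_at C k \<equiv> snd (snd (sent C ! k))"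

definition broadcast :: "rid \<Rightarrow> 'v msg \<Rightarrow> 'v conf \<Rightarrow> 'v conf" where
  "broadcast r m C = C\<lparr>sent := sent C @ [(r, m, delivered C r)]\<rparr>"

definition deliver :: "rid \<Rightarrow> nat \<Rightarrow> 'v conf \<Rightarrow> 'v conf" where
  "deliver r k C = C\<lparr>delivered := (delivered C)(r := insert k (delivered C r)),
     trees := (trees C)(r := apply_msg (msg_at C k) (trees C r))\<rparr>"

lemma send_eq_deliver_broadcast: "send r m C = deliver r (length (sent C)) (broadcast r m C)"
  by (simp add: send_def deliver_def broadcast_def)

definition tombstone :: "'v node \<Rightarrow> 'v node" where
  "tombstone nd = nd\<lparr>val := None\<rparr>"

lemma tombstone_eqD:
  "tombstone nd = tombstone nd' \<Longrightarrow>
    parent nd = parent nd' \<and> side nd = side nd' \<and> rorig nd = rorig nd' \<and> lorig nd = lorig nd'"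
  unfolding tombstone_def by (metis node.select_convs node.surjective node.update_convs(1))

definition logged_at :: "'v conf \<Rightarrow> nat set \<Rightarrow> 'v tree \<Rightarrow> bool" where
  "logged_at C K T \<longleftrightarrow> (\<forall>n nd. T n = Some nd \<longrightarrow>
     (\<exists>k\<in>K. k < length (sent C) \<and> (\<exists>nd0. msg_at C k = Ins n nd0 \<and> tombstone nd = tombstone nd0)))"

lemma logged_at_append:
  assumes "logged_at C K T" "sent C' = sent C @ ms"
  shows "logged_at C' K T"
proof -
  have old: "k < length (sent C') \<and> msg_at C' k = msg_at C k" if "k < length (sent C)" for k
    using that assms(2) by (simp add: nth_append)
  show ?thesis unfolding logged_at_def
  proof (intro allI impI)
    fix n nd assume "T n = Some nd"
    then obtain k nd0 where k: "k \<in> K" "k < length (sent C)" "msg_at C k = Ins n nd0"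
      and eq: "tombstone nd = tombstone nd0"
      using assms(1) unfolding logged_at_def by blast
    then have "k < length (sent C')" "msg_at C' k = Ins n nd0" using old[OF k(2)] by simp_all
    then show "\<exists>k\<in>K. k < length (sent C') \<and> (\<exists>nd0. msg_at C' k = Ins n nd0 \<and> tombstone nd = tombstone nd0)"
      using k(1) eq by blast
  qed
qed

lemma logged_at_dom:
  "logged_at C K T \<Longrightarrow> p \<in> dom T \<Longrightarrow> \<exists>j\<in>K. j < length (sent C) \<and> (\<exists>nd. msg_at C j = Ins p nd)"
  unfolding logged_at_def by blast

lemma logged_at_apply_msg:
  assumes "logged_at C K T" "k < length (sent C)"
  shows "logged_at C (insert k K) (apply_msg (msg_at C k) T)"
proof (cases "msg_at C k")
  case (Ins n nd)
  then show ?thesis using assms by (auto simp: logged_at_def)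
next
  case (Del m)
  then show ?thesis using assms by (fastforce simp: logged_at_def tombstone_def)
qed

definition delivered_sent :: "'v conf \<Rightarrow> bool" where
  "delivered_sent C \<longleftrightarrow> (\<forall>r. delivered C r \<subseteq> {..<length (sent C)})"

definition unique_ins_ids :: "'v conf \<Rightarrow> bool" where
  "unique_ins_ids C \<longleftrightarrow> (\<forall>k k' n nd nd'. k < length (sent C) \<longrightarrow> k' < length (sent C) \<longrightarrow>
     msg_at C k = Ins n nd \<longrightarrow> msg_at C k' = Ins n nd' \<longrightarrow> k = k')"

definition ins_ids_below_ctr :: "'v conf \<Rightarrow> bool" where
  "ins_ids_below_ctr C \<longleftrightarrow>
     (\<forall>k s c nd. k < length (sent C) \<longrightarrow> msg_at C k = Ins (s, c) nd \<longrightarrow> c < ctr C s)"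

definition trees_logged :: "'v conf \<Rightarrow> bool" where
  "trees_logged C \<longleftrightarrow> (\<forall>r. logged_at C (delivered C r) (trees C r))"

definition delivered_ins_in_trees :: "'v conf \<Rightarrow> bool" where
  "delivered_ins_in_trees C \<longleftrightarrow>
     (\<forall>r k n nd. k \<in> delivered C r \<longrightarrow> msg_at C k = Ins n nd \<longrightarrow> n \<in> dom (trees C r))"

(* Each inserted node was well placed in some tree all of whose nodes come from insertions the
   sender had received when it sent the node. *)
definition ins_well_placed :: "'v conf \<Rightarrow> bool" where
  "ins_well_placed C \<longleftrightarrow> (\<forall>k n nd. k < length (sent C) \<longrightarrow> msg_at C k = Ins n nd \<longrightarrow>
     (\<exists>T0. well_placed T0 nd \<and> logged_at C (deps_at C k) T0))"

definition trees_ranked :: "'v conf \<Rightarrow> bool" where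
  "trees_ranked C \<longleftrightarrow> (\<forall>r. \<exists>\<rho>. ranked_tree (trees C r) \<rho>)"

definition conf_inv :: "'v conf \<Rightarrow> bool" where
  "conf_inv C \<longleftrightarrow> delivered_sent C \<and> unique_ins_ids C \<and> ins_ids_below_ctr C \<and> trees_logged C
     \<and> delivered_ins_in_trees C \<and> ins_well_placed C \<and> trees_ranked C"

lemma conf_inv_init: "conf_inv init_conf"
  by (simp add: conf_inv_def init_conf_def delivered_sent_def unique_ins_ids_def ins_ids_below_ctr_def
      trees_logged_def logged_at_def delivered_ins_in_trees_def ins_well_placed_def trees_ranked_def
      ranked_tree_def)

lemma conf_inv_incr_ctr: "conf_inv C \<Longrightarrow> conf_inv (C\<lparr>ctr := (ctr C)(r := Suc (ctr C r))\<rparr>)"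
  by (auto simp: conf_inv_def delivered_sent_def unique_ins_ids_def ins_ids_below_ctr_def
      trees_logged_def logged_at_def delivered_ins_in_trees_def ins_well_placed_def trees_ranked_def
      less_SucI)

lemma broadcast_simps [simp]:
  "sent (broadcast r m C) = sent C @ [(r, m, delivered C r)]"
  "delivered (broadcast r m C) = delivered C" "trees (broadcast r m C) = trees C"
  "ctr (broadcast r m C) = ctr C"
  by (simp_all add: broadcast_def)

lemma ins_well_placed_broadcast:
  assumes placed: "ins_well_placed C" and logged: "trees_logged C"
    and new: "\<And>n nd. m = Ins n nd \<Longrightarrow> well_placed (trees C r) nd"
  shows "ins_well_placed (broadcast r m C)"
  unfolding ins_well_placed_def
proof (intro allI impI)
  fix k n nd
  assume k: "k < length (sent (broadcast r m C))" and ins: "msg_at (broadcast r m C) k = Ins n nd"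
  have log: "logged_at (broadcast r m C) K T" if "logged_at C K T" for K T
    using logged_at_append[OF that] by simp
  show "\<exists>T0. well_placed T0 nd \<and> logged_at (broadcast r m C) (deps_at (broadcast r m C) k) T0"
  proof (cases "k < length (sent C)")
    case True
    then have "msg_at C k = Ins n nd" using ins by (simp add: nth_append)
    then obtain T0 where "well_placed T0 nd" "logged_at C (deps_at C k) T0"
      using placed True unfolding ins_well_placed_def by blast
    moreover have "deps_at (broadcast r m C) k = deps_at C k" using True by (simp add: nth_append)
    ultimately show ?thesis using log by metis
  next
    case False
    then have "k = length (sent C)" using k by simp
    then show ?thesis using ins new logged log unfolding trees_logged_def by auto
  qed
qed

lemma conf_inv_broadcast:
  assumes inv: "conf_inv C"
    and new: "\<And>n nd. m = Ins n nd \<Longrightarrow> (\<forall>k < length (sent C). \<forall>nd'. msg_at C k \<noteq> Ins n nd')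
      \<and> snd n < ctr C (fst n) \<and> well_placed (trees C r) nd"
  shows "conf_inv (broadcast r m C)"
proof -
  define C' where "C' = broadcast r m C"
  define Ln where "Ln = length (sent C)"
  have sent: "sent C' = sent C @ [(r, m, delivered C r)]" and unchanged:
    "delivered C' = delivered C" "trees C' = trees C" "ctr C' = ctr C"
    by (simp_all add: C'_def)
  have old: "k < Ln \<Longrightarrow> sent C' ! k = sent C ! k" for k by (simp add: sent Ln_def nth_append)
  have last: "msg_at C' Ln = m" "deps_at C' Ln = delivered C r" by (simp_all add: sent Ln_def)
  have index: "k < length (sent C') \<longleftrightarrow> k < Ln \<or> k = Ln" for k by (auto simp: sent Ln_def)
  have logged: "logged_at C K T \<Longrightarrow> logged_at C' K T" for K T using logged_at_append sent by blast
  have "{..<length (sent C)} \<subseteq> {..<length (sent C')}" by (simp add: sent)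
  then have "delivered_sent C'"
    using inv subset_trans unfolding conf_inv_def delivered_sent_def unchanged by blast
  moreover have "unique_ins_ids C'"
    using inv new unfolding conf_inv_def unique_ins_ids_def index
    by (metis Ln_def last(1) less_irrefl old)
  moreover have "ins_ids_below_ctr C'"
    using inv new unfolding conf_inv_def ins_ids_below_ctr_def index unchanged
    by (metis Ln_def fst_conv last(1) old snd_conv)
  moreover have "trees_logged C'"
    using inv logged by (simp add: conf_inv_def trees_logged_def unchanged)
  moreover have "delivered_ins_in_trees C'"
    using inv old unfolding conf_inv_def delivered_ins_in_trees_def delivered_sent_def unchanged Ln_def
    by (metis lessThan_iff subsetD)
  moreover have "ins_well_placed C'"
    using inv new ins_well_placed_broadcast unfolding conf_inv_def C'_def by blast
  moreover have "trees_ranked C'" using inv by (simp add: conf_inv_def trees_ranked_def unchanged)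
  ultimately show ?thesis by (simp add: conf_inv_def C'_def)
qed

lemma ranked_tree_insert:
  assumes T: "ranked_tree T \<rho>" and n: "n \<notin> dom T"
    and nd: "\<And>p. parent nd = Nd p \<Longrightarrow> p \<in> dom T" "\<And>m. rorig nd = Some m \<Longrightarrow> m \<in> dom T"
      "parent nd = Root \<Longrightarrow> side nd = R"
  shows "ranked_tree (T(n \<mapsto> nd)) (\<rho>(n := Suc (Max (\<rho> ` dom T))))"
proof -
  define \<rho>' where "\<rho>' = \<rho>(n := Suc (Max (\<rho> ` dom T)))"
  have fin: "finite (dom T)" using ranked_tree_finite[OF T] .
  have old: "\<rho>' p = \<rho> p" if "p \<in> dom T" for p using that n by (auto simp: \<rho>'_def)
  have below: "\<rho>' p < \<rho>' n" if "p \<in> dom T" for p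
  proof -
    have "\<rho> p \<le> Max (\<rho> ` dom T)" using Max_ge[OF finite_imageI[OF fin] imageI[OF that]] .
    then show ?thesis using old[OF that] by (simp add: \<rho>'_def)
  qed
  have "(case parent ndk of Root \<Rightarrow> side ndk = R | Nd p \<Rightarrow> p \<in> dom (T(n \<mapsto> nd)) \<and> \<rho>' p < \<rho>' k) \<and>
      (case rorig ndk of None \<Rightarrow> True | Some m \<Rightarrow> m \<in> dom (T(n \<mapsto> nd)) \<and> \<rho>' m < \<rho>' k)"
    if k: "(T(n \<mapsto> nd)) k = Some ndk" for k ndk
  proof (cases "k = n")
    case True
    then have "ndk = nd" using k by simp
    then show ?thesis using nd below True by (auto split: nref.split option.split)
  next
    case False
    then have Tk: "T k = Some ndk" using k by simp
    then have "k \<in> dom T" by blast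
    then show ?thesis using ranked_treeD[OF T Tk] old by (auto split: nref.split option.split)
  qed
  moreover have "finite (dom (T(n \<mapsto> nd)))" using fin by simp
  ultimately show ?thesis unfolding ranked_tree_def \<rho>'_def[symmetric] by blast
qed

lemma ranked_tree_delete:
  assumes T: "ranked_tree T \<rho>"
  shows "ranked_tree (apply_msg (Del m) T) \<rho>"
proof -
  have dom: "dom (apply_msg (Del m) T) = dom T" by auto
  have "(case parent nd of Root \<Rightarrow> side nd = R | Nd p \<Rightarrow> p \<in> dom T \<and> \<rho> p < \<rho> n) \<and>
      (case rorig nd of None \<Rightarrow> True | Some m \<Rightarrow> m \<in> dom T \<and> \<rho> m < \<rho> n)"
    if del: "apply_msg (Del m) T n = Some nd" for n nd
  proof -
    obtain nd0 where nd0: "T n = Some nd0" "nd = nd0 \<or> nd = nd0\<lparr>val := None\<rparr>"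
      using del by (cases "n = m") auto
    then have "parent nd = parent nd0" "side nd = side nd0" "rorig nd = rorig nd0" by auto
    then show ?thesis using ranked_treeD[OF T nd0(1)] by (auto split: nref.split)
  qed
  moreover have "finite (dom T)" using ranked_tree_finite[OF T] .
  ultimately show ?thesis unfolding ranked_tree_def dom by blast
qed

lemma deliver_simps [simp]:
  "sent (deliver r k C) = sent C" "ctr (deliver r k C) = ctr C"
  "delivered (deliver r k C) = (delivered C)(r := insert k (delivered C r))"
  "trees (deliver r k C) = (trees C)(r := apply_msg (msg_at C k) (trees C r))"
  by (simp_all add: deliver_def)

lemma undelivered_ins_fresh:
  assumes "unique_ins_ids C" "trees_logged C" "k < length (sent C)" "k \<notin> delivered C r"
    "msg_at C k = Ins n nd"
  shows "n \<notin> dom (trees C r)"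
proof
  assume "n \<in> dom (trees C r)"
  then obtain j nd' where j: "j \<in> delivered C r" "j < length (sent C)" "msg_at C j = Ins n nd'"
    using logged_at_dom assms(2) unfolding trees_logged_def by blast
  then have "j = k" using assms(1,3,5) unfolding unique_ins_ids_def by blast
  then show False using j(1) assms(4) by simp
qed

lemma ranked_tree_deliver:
  assumes inv: "conf_inv C" and k: "k < length (sent C)" "k \<notin> delivered C r"
    and deps: "deps_at C k \<subseteq> delivered C r"
  shows "\<exists>\<rho>. ranked_tree (apply_msg (msg_at C k) (trees C r)) \<rho>"
proof -
  define T where "T = trees C r"
  obtain \<rho> where T: "ranked_tree T \<rho>" using inv by (auto simp: conf_inv_def trees_ranked_def T_def)
  show ?thesis
  proof (cases "msg_at C k")
    case (Ins n nd)
    have "n \<notin> dom T"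
      using undelivered_ins_fresh[OF _ _ k Ins] inv by (simp add: conf_inv_def T_def)
    moreover obtain T0 where T0: "well_placed T0 nd" "logged_at C (deps_at C k) T0"
      using inv Ins k(1) unfolding conf_inv_def ins_well_placed_def by blast
    have "p \<in> dom T" if p: "p \<in> dom T0" for p
    proof -
      obtain j nd' where "j \<in> deps_at C k" "msg_at C j = Ins p nd'"
        using logged_at_dom[OF T0(2) p] by blast
      then show ?thesis using deps inv unfolding conf_inv_def delivered_ins_in_trees_def T_def by blast
    qed
    then have "\<And>p. parent nd = Nd p \<Longrightarrow> p \<in> dom T" "\<And>m. rorig nd = Some m \<Longrightarrow> m \<in> dom T"
      "parent nd = Root \<Longrightarrow> side nd = R"
      using T0(1) unfolding well_placed_def by blast+
    ultimately have "ranked_tree (T(n \<mapsto> nd)) (\<rho>(n := Suc (Max (\<rho> ` dom T))))"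
      by (rule ranked_tree_insert[OF T])
    then show ?thesis unfolding T_def[symmetric] Ins by auto
  next
    case (Del m)
    show ?thesis unfolding T_def[symmetric] Del using ranked_tree_delete[OF T] by blast
  qed
qed

lemma delivered_ins_in_trees_deliver:
  assumes "delivered_ins_in_trees C"
  shows "delivered_ins_in_trees (deliver r k C)"
  unfolding delivered_ins_in_trees_def
proof (intro allI impI)
  fix r' j n nd assume j: "j \<in> delivered (deliver r k C) r'" and ins: "msg_at (deliver r k C) j = Ins n nd"
  have dom_mono: "dom (trees C r') \<subseteq> dom (trees (deliver r k C) r')"
    by (cases "msg_at C k") auto
  show "n \<in> dom (trees (deliver r k C) r')"
  proof (cases "r' = r \<and> j = k")
    case True
    then show ?thesis using ins by simp
  next
    case False
    then have "j \<in> delivered C r'" using j by (auto split: if_splits)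
    moreover have "msg_at C j = Ins n nd" using ins by simp
    ultimately have "n \<in> dom (trees C r')" using assms unfolding delivered_ins_in_trees_def by blast
    then show ?thesis using dom_mono by blast
  qed
qed

lemma conf_inv_deliver:
  assumes inv: "conf_inv C" and k: "k < length (sent C)" "k \<notin> delivered C r"
    and deps: "deps_at C k \<subseteq> delivered C r"
  shows "conf_inv (deliver r k C)"
proof -
  define C' where "C' = deliver r k C"
  have same_log: "logged_at C' = logged_at C" by (intro ext) (simp add: logged_at_def C'_def)
  have old: "delivered_sent C" "unique_ins_ids C" "ins_ids_below_ctr C" "trees_logged C"
    "delivered_ins_in_trees C" "ins_well_placed C" "trees_ranked C"
    using inv unfolding conf_inv_def by simp_all
  have "delivered_sent C'"
    using old(1) k(1) unfolding delivered_sent_def by (auto simp: C'_def)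
  moreover have "unique_ins_ids C'" "ins_ids_below_ctr C'" "ins_well_placed C'"
    using old(2,3,6) unfolding unique_ins_ids_def ins_ids_below_ctr_def ins_well_placed_def same_log
    by (simp_all add: C'_def)
  moreover have "trees_logged C'"
    using old(4) logged_at_apply_msg[OF _ k(1)] unfolding trees_logged_def same_log
    by (simp add: C'_def)
  moreover have "delivered_ins_in_trees C'"
    using delivered_ins_in_trees_deliver[OF old(5)] by (simp add: C'_def)
  moreover have "trees_ranked C'"
    using old(7) ranked_tree_deliver[OF inv k deps] unfolding trees_ranked_def by (simp add: C'_def)
  ultimately show ?thesis by (simp add: conf_inv_def C'_def)
qed

lemma conf_inv_send:
  assumes inv: "conf_inv C"
    and new: "\<And>n nd. m = Ins n nd \<Longrightarrow> (\<forall>k < length (sent C). \<forall>nd'. msg_at C k \<noteq> Ins n nd')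
      \<and> snd n < ctr C (fst n) \<and> well_placed (trees C r) nd"
  shows "conf_inv (send r m C)"
proof -
  have "length (sent C) \<notin> delivered C r"
    using inv by (auto simp: conf_inv_def delivered_sent_def)
  then show ?thesis
    unfolding send_eq_deliver_broadcast
    by (intro conf_inv_deliver conf_inv_broadcast[OF inv new]) (simp_all add: broadcast_def)
qed

lemma reachable_conf_inv: "reachable a C \<Longrightarrow> conf_inv C"
proof (induction rule: reachable.induct)
  case init
  show ?case by (rule conf_inv_init)
next
  case (insert C i r x)
  define n where "n = (r, ctr C r)"
  define C1 where "C1 = C\<lparr>ctr := (ctr C)(r := Suc (ctr C r))\<rparr>"
  obtain \<rho> where "ranked_tree (trees C r) \<rho>"
    using insert.IH by (auto simp: conf_inv_def trees_ranked_def)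
  then have "well_placed (trees C1 r) (ins_node a r i x C)"
    using ins_node_well_placed insert.hyps(2) by (simp add: C1_def)
  moreover have "\<forall>k < length (sent C1). \<forall>nd'. msg_at C1 k \<noteq> Ins n nd'"
    using insert.IH by (auto simp: conf_inv_def ins_ids_below_ctr_def C1_def n_def)
  moreover have "snd n < ctr C1 (fst n)" by (simp add: C1_def n_def)
  ultimately have "conf_inv (send r (Ins n (ins_node a r i x C)) C1)"
    using conf_inv_send conf_inv_incr_ctr[OF insert.IH] unfolding C1_def by blast
  moreover have "send r (Ins n (ins_node a r i x C)) C1
      = (send r (Ins n (ins_node a r i x C)) C)\<lparr>ctr := (ctr C)(r := Suc (ctr C r))\<rparr>"
    by (cases C) (simp add: send_def C1_def)
  ultimately show ?case by (simp add: n_def)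
next
  case (delete C i r)
  show ?case by (rule conf_inv_send[OF delete.IH]) simp
next
  case (deliver C k r)
  then show ?case using conf_inv_deliver[OF deliver.IH deliver.hyps(2-4)] by (simp add: deliver_def)
qed

lemma logged_at_agree:
  assumes "unique_ins_ids C" "logged_at C K T" "logged_at C K' T'" "T n = Some nd" "T' n = Some nd'"
  shows "tombstone nd = tombstone nd'"
  using assms unfolding unique_ins_ids_def logged_at_def by (metis msg.inject(1))

lemma walk_up_transfer:
  assumes "walk_up T0 d w" "d \<in> dom T"
    and agree: "\<And>m nd0 nd. T0 m = Some nd0 \<Longrightarrow> T m = Some nd \<Longrightarrow> parent nd = parent nd0 \<and> side nd = side nd0"
    and closed: "\<And>m nd p. T m = Some nd \<Longrightarrow> parent nd = Nd p \<Longrightarrow> p \<in> dom T"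
  shows "walk_up T d w"
  using assms(1,2)
proof (induction rule: walk_up.induct)
  case (right d nd0)
  then obtain nd where "T d = Some nd" by auto
  then show ?case using agree[OF right.hyps(1)] right.hyps(2) walk_up.right by metis
next
  case (left d nd0 p w)
  then obtain nd where nd: "T d = Some nd" by auto
  then have "parent nd = Nd p" "side nd = L" using agree[OF left.hyps(1)] left.hyps(2,3) by auto
  then show ?case using left.IH closed[OF nd] walk_up.left[of T d nd p w] nd by blast
qed

lemma conf_inv_walk_up_lorig:
  assumes inv: "conf_inv C" and D: "trees C r D = Some nd"
  shows "walk_up (trees C r) D (lorig nd)"
proof -
  define T where "T = trees C r"
  have unique: "unique_ins_ids C" and logged: "logged_at C (delivered C r) T"
    using inv by (simp_all add: conf_inv_def trees_logged_def T_def)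
  obtain \<rho> where ranked: "ranked_tree T \<rho>" using inv by (auto simp: conf_inv_def trees_ranked_def T_def)
  obtain k nd0 where k: "k < length (sent C)" "msg_at C k = Ins D nd0" "tombstone nd = tombstone nd0"
    using logged D unfolding logged_at_def T_def by blast
  then obtain T0 where T0: "well_placed T0 nd0" "logged_at C (deps_at C k) T0"
    using inv unfolding conf_inv_def ins_well_placed_def by blast
  have same: "parent nd = parent nd0" "side nd = side nd0" "lorig nd = lorig nd0"
    using tombstone_eqD[OF k(3)] by simp_all
  have DT: "T D = Some nd" using D by (simp add: T_def)
  show ?thesis
  proof (cases "side nd")
    case R
    then show ?thesis using T0(1) same walk_up.right[of T D nd, OF DT] by (simp add: well_placed_def T_def)
  next
    case L
    then obtain p where p: "parent nd = Nd p" "walk_up T0 p (lorig nd)"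
      using T0(1) same by (auto simp: well_placed_def)
    have "walk_up T p (lorig nd)"
    proof (rule walk_up_transfer[OF p(2)])
      show "p \<in> dom T" using ranked_tree_parent[OF ranked DT p(1)] by simp
      show "parent nd' = parent nd0' \<and> side nd' = side nd0'" if "T0 m = Some nd0'" "T m = Some nd'" for m nd0' nd'
        using tombstone_eqD[OF logged_at_agree[OF unique logged T0(2) that(2,1)]] by simp
      show "p' \<in> dom T" if "T m = Some nd'" "parent nd' = Nd p'" for m nd' p'
        using ranked_tree_parent[OF ranked that] by simp
    qed
    then show ?thesis using walk_up.left[of T D nd p, OF DT L p(1)] by (simp add: T_def)
  qed
qed

theorem lemma4:
  fixes a :: alg and C :: "'v conf" and r :: rid
  assumes "reachable a C"
  shows "(\<forall>D nd. trees C r D = Some nd \<longrightarrow> walk_up (trees C r) D (lorig nd))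
       \<and> (\<forall>A B. A \<in> dom (trees C r) \<longrightarrow> B \<in> dom (trees C r) \<longrightarrow> lo_less a (trees C r) A B \<longrightarrow>
            ((Nd A, Nd B) \<in> (tree_edges (trees C r))\<^sup>+ \<longleftrightarrow> (Nd A, Nd B) \<in> (lo_edges (trees C r))\<^sup>+))"
proof -
  define T where "T = trees C r"
  have inv: "conf_inv C" using reachable_conf_inv[OF assms] .
  then obtain \<rho> where ranked: "ranked_tree T \<rho>" by (auto simp: conf_inv_def trees_ranked_def T_def)
  have walk: "\<And>D nd. T D = Some nd \<Longrightarrow> walk_up T D (lorig nd)"
    using conf_inv_walk_up_lorig[OF inv] by (simp add: T_def)
  have "(Nd A, Nd B) \<in> (tree_edges T)\<^sup>+ \<longleftrightarrow> (Nd A, Nd B) \<in> (lo_edges T)\<^sup>+" if "lo_less a T A B" for A B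
    using tree_descendant_imp_lo_descendant[OF ranked walk that] lo_edges_trancl_subset[OF walk] by blast
  then show ?thesis using walk unfolding T_def by blast
qed

end
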